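(* Let $n\ge 3$, let $K$ be a proper $4$-coloring of $G=H_2(n,n-1)$, and let $x_1,x_2,x_3,x_4$ be distinct vertices such that $(x_1,x_2),(x_2,x_3),(x_3,x_4),(x_4,x_1)$ are all transition edges for $K$. Then: (a) the colors $K(x_1),\dots,K(x_4)$ are pairwise distinct; (b) every vertex $y\notin\{x_1,\dots,x_4\}$ is adjacent to at most one of $x_1,\dots,x_4$, and if $y$ is adjacent to $x_i$ then $K(y)=K(\tilde{x}_i)$, where $\tilde{x}_i$ is the vertex opposite to $x_i$ on the cycle (i.e. $\tilde{x}_1=x_3$, $\tilde{x}_3=x_1$, $\tilde{x}_2=x_4$, $\tilde{x}_4=x_2$).
   Context: $H_2(n,n-1)$ is the simple undirected graph with vertex set $\mathbb{Z}_2^n$ in which $x,y$ are adjacent iff their Hamming distance is at least $n-1$. For a proper $k$-coloring $K$ of a simple graph, an edge $(x,y)$ is a transition edge for $K$ if swapping the colors of $x$ and $y$ (all other colors unchanged) yields again a proper $k$-coloring. *)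

theory Defs
  imports Main
begin

text \<open>Vertices of H_2(n,n-1): the binary words of length n, represented as bool lists.\<close>
definition cube :: "nat \<Rightarrow> bool list set" where
  "cube n = {xs. length xs = n}"

definition hamming :: "bool list \<Rightarrow> bool list \<Rightarrow> nat" where
  "hamming xs ys = card {i. i < length xs \<and> xs ! i \<noteq> ys ! i}"

definition H_adj :: "nat \<Rightarrow> bool list \<Rightarrow> bool list \<Rightarrow> bool" where
  "H_adj n x y \<longleftrightarrow> x \<in> cube n \<and> y \<in> cube n \<and> x \<noteq> y \<and> hamming x y \<ge> n - 1"

definition proper_coloring :: "nat \<Rightarrow> nat \<Rightarrow> (bool list \<Rightarrow> nat) \<Rightarrow> bool" where
  "proper_coloring n k K \<longleftrightarrow>
     (\<forall>x\<in>cube n. K x < k) \<and> (\<forall>x y. H_adj n x y \<longrightarrow> K x \<noteq> K y)"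

definition transition_edge :: "nat \<Rightarrow> nat \<Rightarrow> (bool list \<Rightarrow> nat) \<Rightarrow> bool list \<Rightarrow> bool list \<Rightarrow> bool" where
  "transition_edge n k K x y \<longleftrightarrow>
     H_adj n x y \<and> proper_coloring n k (K(x := K y, y := K x))"

end

theory Submission
  imports Defs
begin

text \<open>Swapping the colours along a transition edge u v keeps the colouring proper, so every other
  neighbour of u must avoid the colour of v. Around a 4-cycle of transition edges this forces the
  four cycle colours to be distinct, and a neighbour y of a cycle vertex x must avoid the colours
  of x and of both cycle neighbours of x; with only four colours, y gets the colour of the vertex
  opposite x.\<close>

lemma hamming_commute: "length xs = length ys \<Longrightarrow> hamming xs ys = hamming ys xs"
  unfolding hamming_def by metis

lemma H_adj_sym: "H_adj n x y \<Longrightarrow> H_adj n y x"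
  unfolding H_adj_def cube_def using hamming_commute by auto

lemma transition_edge_sym:
  assumes "transition_edge n k K u v"
  shows "transition_edge n k K v u"
proof -
  have "u \<noteq> v" using assms unfolding transition_edge_def H_adj_def by blast
  then have "K(u := K v, v := K u) = K(v := K u, u := K v)" by (rule fun_upd_twist)
  with assms show ?thesis unfolding transition_edge_def using H_adj_sym by metis
qed

lemma proper_coloring_adj_colours_differ:
  "proper_coloring n k K \<Longrightarrow> H_adj n x y \<Longrightarrow> K x \<noteq> K y"
  unfolding proper_coloring_def by blast

lemma transition_edge_neighbour_colour:
  assumes "transition_edge n k K u v" "H_adj n u z" "z \<noteq> v"
  shows "K z \<noteq> K v"
proof -
  let ?K' = "K(u := K v, v := K u)"
  have "proper_coloring n k ?K'" and "u \<noteq> v" and "z \<noteq> u"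
    using assms unfolding transition_edge_def H_adj_def by auto
  then have "?K' u \<noteq> ?K' z" using assms(2) proper_coloring_adj_colours_differ by blast
  with \<open>u \<noteq> v\<close> \<open>z \<noteq> u\<close> \<open>z \<noteq> v\<close> show ?thesis by simp
qed

lemma transition_edge_colours_differ:
  assumes "transition_edge n k K u v"
  shows "K u \<noteq> K v"
proof -
  have "proper_coloring n k (K(u := K v, v := K u))" "H_adj n u v" "u \<noteq> v"
    using assms unfolding transition_edge_def H_adj_def by auto
  then show ?thesis using proper_coloring_adj_colours_differ by fastforce
qed

lemma mem_of_full_subset_lessThan:
  assumes "A \<subseteq> {..<k}" "card A = k" "c < k"
  shows "c \<in> A"
  using assms card_subset_eq[of "{..<k}" A] by auto

definition transition_cycle ::
    "nat \<Rightarrow> nat \<Rightarrow> (bool list \<Rightarrow> nat) \<Rightarrow> bool list \<Rightarrow> bool list \<Rightarrow> bool list \<Rightarrow> bool list \<Rightarrow> bool" where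
  "transition_cycle n k K a b c d \<longleftrightarrow> distinct [a, b, c, d]
     \<and> transition_edge n k K a b \<and> transition_edge n k K b c
     \<and> transition_edge n k K c d \<and> transition_edge n k K d a"

lemma transition_cycle_rotate:
  "transition_cycle n k K a b c d \<Longrightarrow> transition_cycle n k K b c d a"
  unfolding transition_cycle_def by auto

lemma transition_cycle_opposite_colours_differ:
  assumes "transition_cycle n k K a b c d"
  shows "K a \<noteq> K c"
proof -
  have "transition_edge n k K b c" "H_adj n b a" "a \<noteq> c"
    using assms H_adj_sym unfolding transition_cycle_def transition_edge_def by auto
  then show ?thesis by (rule transition_edge_neighbour_colour)
qed

lemma transition_cycle_colours_distinct:
  assumes "transition_cycle n k K a b c d"
  shows "distinct [K a, K b, K c, K d]"
proof -
  have "K a \<noteq> K c" "K b \<noteq> K d"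
    using assms transition_cycle_rotate transition_cycle_opposite_colours_differ by blast+
  moreover have "K a \<noteq> K b" "K b \<noteq> K c" "K c \<noteq> K d" "K d \<noteq> K a"
    using assms transition_edge_colours_differ unfolding transition_cycle_def by blast+
  ultimately show ?thesis by auto
qed

lemma transition_cycle_neighbour_colour:
  assumes cyc: "transition_cycle n 4 K a b c d" and K: "proper_coloring n 4 K"
    and adj: "H_adj n y a" and "y \<noteq> b" "y \<noteq> d"
  shows "K y = K c"
proof -
  have "K y \<noteq> K a" using K adj by (rule proper_coloring_adj_colours_differ)
  moreover have "K y \<noteq> K b" "K y \<noteq> K d"
    using cyc H_adj_sym[OF adj] transition_edge_sym \<open>y \<noteq> b\<close> \<open>y \<noteq> d\<close>
      transition_edge_neighbour_colour unfolding transition_cycle_def by blast+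
  moreover have "K y \<in> {K a, K b, K c, K d}"
  proof (rule mem_of_full_subset_lessThan)
    have "a \<in> cube n" "b \<in> cube n" "c \<in> cube n" "d \<in> cube n" "y \<in> cube n"
      using cyc adj unfolding transition_cycle_def transition_edge_def H_adj_def by auto
    then show "{K a, K b, K c, K d} \<subseteq> {..<4}" "K y < 4"
      using K unfolding proper_coloring_def by auto
    show "card {K a, K b, K c, K d} = 4"
      using transition_cycle_colours_distinct[OF cyc] by simp
  qed
  ultimately show ?thesis by blast
qed

lemma transition_cycle_of_mod4:
  fixes x :: "nat \<Rightarrow> bool list"
  assumes "\<forall>i<4. \<forall>j<4. i \<noteq> j \<longrightarrow> x i \<noteq> x j"
    and "\<forall>i<4. transition_edge n k K (x i) (x ((i + 1) mod 4))"
  shows "transition_cycle n k K (x 0) (x 1) (x 2) (x 3)"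
proof -
  have "transition_edge n k K (x i) (x j)" if "i < 4" "(i + 1) mod 4 = j" for i j
    using assms(2) that by blast
  moreover have "x i \<noteq> x j" if "i < 4" "j < 4" "i \<noteq> j" for i j
    using assms(1) that by blast
  ultimately show ?thesis unfolding transition_cycle_def by simp
qed

lemma transition_cycle_shift:
  fixes x :: "nat \<Rightarrow> bool list"
  assumes cyc: "transition_cycle n k K (x 0) (x 1) (x 2) (x 3)" and "i < 4"
  shows "transition_cycle n k K
           (x i) (x ((i + 1) mod 4)) (x ((i + 2) mod 4)) (x ((i + 3) mod 4))"
proof -
  note cyc1 = transition_cycle_rotate[OF cyc]
  note cyc2 = transition_cycle_rotate[OF cyc1]
  note cyc3 = transition_cycle_rotate[OF cyc2]
  have "i = 0 \<or> i = 1 \<or> i = 2 \<or> i = 3" using \<open>i < 4\<close> by arith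
  \<comment> \<open>Without these deletions simp turns \<open>(1 + 1) mod 4\<close> into \<open>Suc (Suc 0)\<close>, which no longer
    matches the numeral index \<open>2\<close> in the rotated cycles.\<close>
  then show ?thesis
    using cyc cyc1 cyc2 cyc3 by (elim disjE) (simp_all del: One_nat_def add_2_eq_Suc add_2_eq_Suc')
qed

lemma card_le_one_if_inj_on_const:
  assumes "inj_on g S" "\<And>i. i \<in> S \<Longrightarrow> g i = c"
  shows "card S \<le> 1"
proof -
  have "card S = card (g ` S)" using assms(1) by (simp add: card_image)
  also have "\<dots> \<le> card {c}" using assms(2) by (intro card_mono) auto
  finally show ?thesis by simp
qed

theorem lemma5p6:
  fixes n :: nat and K :: "bool list \<Rightarrow> nat" and x :: "nat \<Rightarrow> bool list"
  assumes "n \<ge> 3"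
    and "proper_coloring n 4 K"
    and "\<forall>i<4. x i \<in> cube n"
    and "\<forall>i<4. \<forall>j<4. i \<noteq> j \<longrightarrow> x i \<noteq> x j"
    and "\<forall>i<4. transition_edge n 4 K (x i) (x ((i + 1) mod 4))"
  shows "(\<forall>i<4. \<forall>j<4. i \<noteq> j \<longrightarrow> K (x i) \<noteq> K (x j))
       \<and> (\<forall>y\<in>cube n. y \<notin> x ` {0..<4} \<longrightarrow>
            card {i. i < 4 \<and> H_adj n y (x i)} \<le> 1
          \<and> (\<forall>i<4. H_adj n y (x i) \<longrightarrow> K y = K (x ((i + 2) mod 4))))"
proof -
  have cyc: "transition_cycle n 4 K (x 0) (x 1) (x 2) (x 3)"
    using assms(4,5) by (rule transition_cycle_of_mod4)
  have colours: "\<forall>i<4. \<forall>j<4. i \<noteq> j \<longrightarrow> K (x i) \<noteq> K (x j)"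
    using transition_cycle_colours_distinct[OF cyc] by (auto simp: less_Suc_eq eval_nat_numeral)
  have neighbour: "K y = K (x ((i + 2) mod 4))"
    if y: "y \<notin> x ` {0..<4}" and "i < 4" "H_adj n y (x i)" for y i
  proof (rule transition_cycle_neighbour_colour[OF transition_cycle_shift[OF cyc \<open>i < 4\<close>] assms(2)])
    show "y \<noteq> x ((i + 1) mod 4)" "y \<noteq> x ((i + 3) mod 4)" using y by auto
  qed fact
  have inj: "inj_on (\<lambda>i. K (x ((i + 2) mod 4))) {..<4}"
  proof (rule inj_onI)
    fix i j :: nat
    assume "i \<in> {..<4}" "j \<in> {..<4}" "K (x ((i + 2) mod 4)) = K (x ((j + 2) mod 4))"
    moreover have "(i + 2) mod 4 < 4" "(j + 2) mod 4 < 4" by simp_all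
    ultimately have "(i + 2) mod 4 = (j + 2) mod 4" using colours by blast
    with \<open>i \<in> {..<4}\<close> \<open>j \<in> {..<4}\<close> show "i = j" by simp presburger
  qed
  have "card {i. i < 4 \<and> H_adj n y (x i)} \<le> 1" if "y \<notin> x ` {0..<4}" for y
  proof (rule card_le_one_if_inj_on_const[where c = "K y"])
    show "inj_on (\<lambda>i. K (x ((i + 2) mod 4))) {i. i < 4 \<and> H_adj n y (x i)}"
      by (rule inj_on_subset[OF inj]) auto
  qed (use neighbour[OF that] in \<open>force\<close>)
  with colours neighbour show ?thesis by blast
qed

end
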